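(* Let $\mathbb{K}\in\{\mathbb{R},\mathbb{C}\}$, $\star\in\{*,T\}$, $\epsilon_1,\epsilon_2\in\{1,-1\}$, and let $Q(\lambda)=\lambda^2M+\lambda D+K\in\mathbb{K}^{n\times n}[\lambda]$ satisfy $M^\star=\epsilon_1M$, $D^\star=\epsilon_2D$, $K^\star=\epsilon_1K$. Suppose $(X_c,\Lambda_c)\in\mathbb{K}^{n\times p_1}\times\mathbb{K}^{p_1\times p_1}$ and $(X_f,\Lambda_f)\in\mathbb{K}^{n\times p_2}\times\mathbb{K}^{p_2\times p_2}$ are invariant pairs of $Q(\lambda)$. Let $\Lambda_a\in\mathbb{K}^{p_1\times p_1}$ and put $S=X_c^\star MX_c\Lambda_c+\epsilon_1\epsilon_2\Lambda_c^\star X_c^\star MX_c+X_c^\star DX_c$. Assume that (1) $\sigma(\Lambda_c)\cap\sigma(\epsilon_1\epsilon_2\Lambda_f^\star)=\emptyset$, and (2) $R:=X_c^\star MX_c\Lambda_a+\epsilon_1\epsilon_2\Lambda_c^\star X_c^\star MX_c+X_c^\star DX_c$ is nonsingular. Let $Z=(\Lambda_c-\Lambda_a)R^{-1}$ and $\triangle M=MX_cZX_c^\star M$, $\triangle D=\epsilon_1\epsilon_2MX_cZ\Lambda_c^\star X_c^\star M+MX_cZX_c^\star D+MX_c\Lambda_cZX_c^\star M+DX_cZX_c^\star M$, $\triangle K=\epsilon_1\epsilon_2MX_c\Lambda_cZ\Lambda_c^\star X_c^\star M+MX_c\Lambda_cZX_c^\star D+\epsilon_1\epsilon_2DX_cZ\Lambda_c^\star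 X_c^\star M+DX_cZX_c^\star D$. Then $(X_c,\Lambda_a)$ and $(X_f,\Lambda_f)$ are invariant pairs of $Q_\triangle(\lambda)=\lambda^2(M+\triangle M)+\lambda(D+\triangle D)+(K+\triangle K)\in\mathbb{K}^{n\times n}[\lambda]$. Moreover, if $S\Lambda_a=\epsilon_1(S\Lambda_a)^\star$, then $(M+\triangle M)^\star=\epsilon_1(M+\triangle M)$, $(D+\triangle D)^\star=\epsilon_2(D+\triangle D)$ and $(K+\triangle K)^\star=\epsilon_1(K+\triangle K)$.
   Context: For a matrix $A$, $A^*$ is the conjugate transpose and $A^T$ the transpose; $A^\star$ means $A^*$ if $\star=*$ and $A^T$ if $\star=T$. $\sigma(A)$ is the spectrum of a square matrix $A$. A pair $(X,\Lambda)\in\mathbb{K}^{n\times p}\times\mathbb{K}^{p\times p}$ is an invariant pair of $Q(\lambda)=\lambda^2M+\lambda D+K$ if $Q(X,\Lambda):=MX\Lambda^2+DX\Lambda+KX=0$. *)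

theory Defs
  imports "Jordan_Normal_Form.Spectral_Radius" "Jordan_Normal_Form.Schur_Decomposition"
          "Jordan_Normal_Form.Gauss_Jordan_Elimination"
begin

definition quad_eval :: "complex mat \<Rightarrow> complex mat \<Rightarrow> complex mat \<Rightarrow> complex mat \<Rightarrow> complex mat \<Rightarrow> complex mat" where
  "quad_eval M D K X L = M * X * (L * L) + D * X * L + K * X"

definition invariant_pair :: "complex mat \<Rightarrow> complex mat \<Rightarrow> complex mat \<Rightarrow> complex mat \<Rightarrow> complex mat \<Rightarrow> bool" where
  "invariant_pair M D K X L \<longleftrightarrow> quad_eval M D K X L = 0\<^sub>m (dim_row X) (dim_col L)"

definition mat_over :: "complex set \<Rightarrow> complex mat \<Rightarrow> bool" where
  "mat_over S A \<longleftrightarrow> (\<forall>i j. i < dim_row A \<longrightarrow> j < dim_col A \<longrightarrow> A $$ (i, j) \<in> S)"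

end

theory Submission
  imports Defs
begin

(* With F = M Xc and G = M Xc Lc + D Xc the updates factor as dM = F Z U, dD = F Z V + G Z U and
   dK = G Z V, where U = Xc^* M and V = e1 e2 Lc^* Xc^* M + Xc^* D.  Hence
   Q_Delta(X, L) = Q(X, L) + F Z W L + G Z W with the coupling W = U X L + V X.
   For (Xc, La) the coupling is R, and Z R = Lc - La turns Q_Delta(Xc, La) into Q(Xc, Lc) = 0.
   For a second invariant pair (X, L) the symmetry of M, D, K makes W solve the Sylvester equation
   W L = e1 e2 Lc^* W, so W = 0 by the spectral hypothesis.  Finally the updates inherit the symmetry
   of M, D, K once Z^* = e1 Z, and this follows from S = R + Xc^* M Xc (Lc - La), S^* = e2 S and the
   hypothesis on S La. *)

lemma assoc_mult_mat_dim:
  "dim_col A = dim_row B \<Longrightarrow> dim_col B = dim_row C \<Longrightarrow> A * B * C = A * (B * (C :: 'a :: semiring_0 mat))"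
  by (rule assoc_mult_mat[of A "dim_row A" "dim_col A" B "dim_col B" C "dim_col C"]) auto

lemma mult_add_distrib_mat_dim:
  "dim_col A = dim_row B \<Longrightarrow> dim_row B = dim_row C \<Longrightarrow> dim_col B = dim_col C \<Longrightarrow>
   A * (B + C) = A * B + A * (C :: 'a :: semiring_0 mat)"
  by (rule mult_add_distrib_mat[of A "dim_row A" "dim_col A" B "dim_col B" C]) auto

lemma add_mult_distrib_mat_dim:
  "dim_row A = dim_row B \<Longrightarrow> dim_col A = dim_col B \<Longrightarrow> dim_col A = dim_row C \<Longrightarrow>
   (A + B) * C = A * C + B * (C :: 'a :: semiring_0 mat)"
  by (rule add_mult_distrib_mat[of A "dim_row A" "dim_col A" B C "dim_col C"]) auto

lemma mult_smult_assoc_mat_dim: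
  "dim_col A = dim_row B \<Longrightarrow> (c \<cdot>\<^sub>m A) * B = c \<cdot>\<^sub>m (A * (B :: 'a :: comm_ring_1 mat))"
  by (rule mult_smult_assoc_mat[of A "dim_row A" "dim_col A" B "dim_col B"]) auto

lemma mult_smult_distrib_dim:
  "dim_col A = dim_row B \<Longrightarrow> A * (c \<cdot>\<^sub>m B) = c \<cdot>\<^sub>m (A * (B :: 'a :: comm_ring_1 mat))"
  by (rule mult_smult_distrib[of A "dim_row A" "dim_col A" B "dim_col B"]) auto

lemma smult_smult_mat: "a \<cdot>\<^sub>m (b \<cdot>\<^sub>m A) = (a * b) \<cdot>\<^sub>m (A :: 'a :: semigroup_mult mat)"
  by (rule eq_matI) (auto simp: mult.assoc)

lemma one_smult_mat: "(1 :: 'a :: monoid_mult) \<cdot>\<^sub>m A = A"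
  by (rule eq_matI) auto

lemma smult_add_distrib_mat_dim:
  "dim_row A = dim_row B \<Longrightarrow> dim_col A = dim_col B \<Longrightarrow>
   c \<cdot>\<^sub>m (A + B) = c \<cdot>\<^sub>m A + c \<cdot>\<^sub>m (B :: 'a :: semiring mat)"
  by (rule eq_matI) (auto simp: distrib_left)

lemma assoc_add_mat_dim:
  "dim_row A = dim_row B \<Longrightarrow> dim_col A = dim_col B \<Longrightarrow> dim_row B = dim_row C \<Longrightarrow>
   dim_col B = dim_col C \<Longrightarrow> A + B + C = A + (B + (C :: 'a :: semigroup_add mat))"
  by (rule eq_matI) (auto simp: add.assoc)

lemma comm_add_mat_dim:
  "dim_row A = dim_row B \<Longrightarrow> dim_col A = dim_col B \<Longrightarrow> A + B = B + (A :: 'a :: ab_semigroup_add mat)"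
  by (rule eq_matI) (auto simp: add.commute)

lemma left_comm_add_mat_dim:
  "dim_row A = dim_row B \<Longrightarrow> dim_col A = dim_col B \<Longrightarrow> dim_row B = dim_row C \<Longrightarrow>
   dim_col B = dim_col C \<Longrightarrow> A + (B + C) = B + (A + (C :: 'a :: ab_semigroup_add mat))"
  by (rule eq_matI) (auto simp: add.left_commute)

text \<open>The library states these laws with carrier_mat premises, whose dimensions simp cannot
  guess; with dimension equations instead, simp discharges the side conditions itself.\<close>
lemmas mat_normalize = assoc_mult_mat_dim mult_add_distrib_mat_dim add_mult_distrib_mat_dim
  mult_smult_assoc_mat_dim mult_smult_distrib_dim smult_smult_mat one_smult_mat
  smult_add_distrib_mat_dim assoc_add_mat_dim comm_add_mat_dim left_comm_add_mat_dim

lemma add_right_cancel_mat: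
  assumes "A + C = B + C" "dim_row A = dim_row C" "dim_col A = dim_col C"
    "dim_row B = dim_row C" "dim_col B = dim_col C"
  shows "A = (B :: 'a :: cancel_semigroup_add mat)"
proof (rule eq_matI)
  fix i j assume "i < dim_row B" "j < dim_col B"
  then have "(A + C) $$ (i, j) = A $$ (i, j) + C $$ (i, j)" "(B + C) $$ (i, j) = B $$ (i, j) + C $$ (i, j)"
    using assms(2-5) by simp_all
  then show "A $$ (i, j) = B $$ (i, j)" using assms(1) by simp
qed (use assms in simp_all)

lemma invertible_mat_inverse:
  fixes R :: "'a :: field mat"
  assumes R: "R \<in> carrier_mat n n" and inv: "invertible_mat R"
  shows "R * the (mat_inverse R) = 1\<^sub>m n" "the (mat_inverse R) * R = 1\<^sub>m n"
    "the (mat_inverse R) \<in> carrier_mat n n"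
proof -
  from inv obtain B where B: "R * B = 1\<^sub>m n" "B * R = 1\<^sub>m (dim_row B)"
    using R unfolding invertible_mat_def inverts_mat_def by auto
  then have "B \<in> carrier_mat n n"
    using R by (metis carrier_matD(2) carrier_matI index_mult_mat(3) index_one_mat(3))
  then have "R \<in> Units (ring_mat TYPE('a) n ())"
    unfolding Units_def ring_mat_simps using R B by auto
  then obtain Ri where "mat_inverse R = Some Ri"
    using mat_inverse(1)[OF R] by fastforce
  with mat_inverse(2)[OF R this] show "R * the (mat_inverse R) = 1\<^sub>m n"
    "the (mat_inverse R) * R = 1\<^sub>m n" "the (mat_inverse R) \<in> carrier_mat n n"
    by auto
qed

lemma upper_triangular_diag_mem_spectrum:
  fixes A T :: "'a :: field mat"
  assumes A: "A \<in> carrier_mat q q" and T: "T \<in> carrier_mat q q" "upper_triangular T"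
    and sim: "similar_mat A T" and j: "j < q"
  shows "T $$ (j, j) \<in> spectrum A"
proof -
  have "spectrum A = {k. poly (char_poly T) k = 0}"
    using spectrum_root_char_poly[OF A] char_poly_similar[OF sim] by simp
  moreover have "char_poly T = (\<Prod>a \<leftarrow> diag_mat T. [:- a, 1:])"
    by (rule char_poly_upper_triangular[OF T])
  moreover have "T $$ (j, j) \<in> set (diag_mat T)"
    using j T by (auto simp: diag_mat_def)
  ultimately show ?thesis by (auto simp: poly_prod_list)
qed

lemma index_mult_upper_triangular:
  assumes T: "T \<in> carrier_mat q q" "upper_triangular T" and Y: "Y \<in> carrier_mat p q"
    and r: "r < p" and j: "j < q" and zero: "\<And>k. k < j \<Longrightarrow> Y $$ (r, k) = 0"
  shows "(Y * T) $$ (r, j) = Y $$ (r, j) * T $$ (j, j)"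
proof -
  have "(Y * T) $$ (r, j) = (\<Sum>k<q. Y $$ (r, k) * T $$ (k, j))"
    using Y T r j by (simp add: scalar_prod_def lessThan_atLeast0)
  also have "\<dots> = Y $$ (r, j) * T $$ (j, j) + (\<Sum>k \<in> {..<q} - {j}. Y $$ (r, k) * T $$ (k, j))"
    by (rule sum.remove) (use j in auto)
  also have "(\<Sum>k \<in> {..<q} - {j}. Y $$ (r, k) * T $$ (k, j)) = 0"
  proof (rule sum.neutral, intro ballI)
    fix k assume k: "k \<in> {..<q} - {j}"
    show "Y $$ (r, k) * T $$ (k, j) = 0"
    proof (cases "k < j")
      case True
      then show ?thesis using zero by simp
    next
      case False
      then show ?thesis using T k by (auto simp: upper_triangular_def)
    qed
  qed
  finally show ?thesis by simp
qed

text \<open>Once the columns before j vanish, column j of A Y = Y T says that col Y j is either zero or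
  an eigenvector of A for the eigenvalue T j j.\<close>
lemma sylvester_upper_triangular_eq_zero:
  fixes A T Y :: "'a :: field mat"
  assumes A: "A \<in> carrier_mat p p" and T: "T \<in> carrier_mat q q" "upper_triangular T"
    and Y: "Y \<in> carrier_mat p q" and eq: "A * Y = Y * T"
    and diag: "\<And>j. j < q \<Longrightarrow> T $$ (j, j) \<notin> spectrum A"
  shows "Y = 0\<^sub>m p q"
proof -
  have "col Y j = 0\<^sub>v p" if "j < q" for j
    using that
  proof (induction j rule: less_induct)
    case (less j)
    have "(A *\<^sub>v col Y j) $ r = (T $$ (j, j) \<cdot>\<^sub>v col Y j) $ r" if r: "r < p" for r
    proof -
      have "Y $$ (r, k) = 0" if "k < j" for k
      proof -
        have "Y $$ (r, k) = col Y k $ r"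
          using Y r that less.prems by simp
        also have "\<dots> = 0"
          using less.IH[of k] that less.prems r by simp
        finally show ?thesis .
      qed
      then have "(Y * T) $$ (r, j) = Y $$ (r, j) * T $$ (j, j)"
        using index_mult_upper_triangular[OF T Y r less.prems] by blast
      moreover have "(A *\<^sub>v col Y j) $ r = (Y * T) $$ (r, j)"
        using A Y T r less.prems by (simp flip: eq)
      ultimately show ?thesis using Y r less.prems by simp
    qed
    then have "A *\<^sub>v col Y j = T $$ (j, j) \<cdot>\<^sub>v col Y j"
      using A Y by (intro eq_vecI) auto
    moreover have "col Y j \<in> carrier_vec p"
      using Y by (intro carrier_vecI) simp
    ultimately have "eigenvector A (col Y j) (T $$ (j, j))" if "col Y j \<noteq> 0\<^sub>v p"
      using A that unfolding eigenvector_def by simp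
    then have "eigenvalue A (T $$ (j, j))" if "col Y j \<noteq> 0\<^sub>v p"
      using that unfolding eigenvalue_def by blast
    then show ?case
      using diag[OF less.prems] unfolding spectrum_def by blast
  qed
  moreover have "Y $$ (i, j) = col Y j $ i" if "i < p" "j < q" for i j
    using Y that by simp
  ultimately have "Y $$ (i, j) = 0" if "i < p" "j < q" for i j
    using that by simp
  then show ?thesis using Y by (intro eq_matI) auto
qed

lemma sylvester_eq_zero:
  fixes A B X :: "complex mat"
  assumes A: "A \<in> carrier_mat p p" and B: "B \<in> carrier_mat q q" and X: "X \<in> carrier_mat p q"
    and eq: "A * X = X * B" and disjoint: "spectrum A \<inter> spectrum B = {}"
  shows "X = 0\<^sub>m p q"
proof -
  obtain es where "char_poly B = (\<Prod>a \<leftarrow> es. [:- a, 1:])"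
    using char_poly_factorized[OF B] by blast
  from schur_upper_triangular[OF B this]
  obtain T where T: "T \<in> carrier_mat q q" "upper_triangular T" "similar_mat B T" by blast
  from similar_matD[OF T(3)] obtain m P Q where
    "{B, T, P, Q} \<subseteq> carrier_mat m m" "P * Q = 1\<^sub>m m" "Q * P = 1\<^sub>m m" "B = P * T * Q"
    by blast
  moreover from this(1) have "m = q" using B by auto
  ultimately have PQ: "P \<in> carrier_mat q q" "Q \<in> carrier_mat q q"
    "P * Q = 1\<^sub>m q" "Q * P = 1\<^sub>m q" "B = P * T * Q"
    by auto
  have BP: "B * P = P * T"
    using T PQ by (simp add: assoc_mult_mat_dim)
  have "A * (X * P) = X * B * P"
    using A B X PQ(1) by (simp add: assoc_mult_mat_dim flip: eq)
  also have "\<dots> = X * P * T"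
    using B X T PQ(1) by (simp add: assoc_mult_mat_dim BP)
  finally have "A * (X * P) = X * P * T" .
  moreover have "T $$ (j, j) \<notin> spectrum A" if "j < q" for j
    using upper_triangular_diag_mem_spectrum[OF B T that] disjoint by blast
  ultimately have "X * P = 0\<^sub>m p q"
    using sylvester_upper_triangular_eq_zero[OF A T(1,2)] X PQ by simp
  moreover have "X = X * P * Q"
    using X PQ by (simp add: assoc_mult_mat_dim)
  ultimately show ?thesis using PQ by simp
qed

locale mat_anti_involution =
  fixes st :: "complex mat \<Rightarrow> complex mat"
  assumes dim_row_st[simp]: "dim_row (st A) = dim_col A"
    and dim_col_st[simp]: "dim_col (st A) = dim_row A"
    and st_mult: "dim_col A = dim_row B \<Longrightarrow> st (A * B) = st B * st A"
    and st_add: "dim_row A = dim_row B \<Longrightarrow> dim_col A = dim_col B \<Longrightarrow> st (A + B) = st A + st B"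
    and st_smult: "cnj c = c \<Longrightarrow> st (c \<cdot>\<^sub>m A) = c \<cdot>\<^sub>m st A"
    and st_st[simp]: "st (st A) = A"
begin

lemma st_zero[simp]: "st (0\<^sub>m r c) = 0\<^sub>m c r"
proof -
  have "st (0\<^sub>m r c) = st (0 \<cdot>\<^sub>m 0\<^sub>m r c)"
    by (intro arg_cong[where f = st] eq_matI) auto
  also have "\<dots> = 0\<^sub>m c r"
    by (subst st_smult) auto
  finally show ?thesis .
qed

lemma st_one[simp]: "st (1\<^sub>m k) = 1\<^sub>m k"
proof -
  have "st (1\<^sub>m k) = st (1\<^sub>m k) * st (st (1\<^sub>m k))" by simp
  also have "\<dots> = st (st (1\<^sub>m k) * 1\<^sub>m k)" by (rule st_mult[symmetric]) simp
  finally show ?thesis by simp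
qed

lemma st_mult_inverse_eq:
  assumes B: "B \<in> carrier_mat k k" and R: "R \<in> carrier_mat k k" and Ri: "Ri \<in> carrier_mat k k"
    and inverse: "R * Ri = 1\<^sub>m k" and c: "cnj c = c"
    and eq: "st B * R = c \<cdot>\<^sub>m (st R * B)"
  shows "st (B * Ri) = c \<cdot>\<^sub>m (B * Ri)"
proof -
  have "st (B * Ri) = st Ri * (st B * R) * Ri"
    using B R Ri by (simp add: st_mult assoc_mult_mat_dim inverse)
  also have "\<dots> = c \<cdot>\<^sub>m (st (R * Ri) * B * Ri)"
    using B R Ri by (simp add: eq st_mult mat_normalize)
  finally show ?thesis using B Ri by (simp add: inverse)
qed

end

lemma mat_adjoint_altdef:
  "mat_adjoint (A :: complex mat) = mat (dim_col A) (dim_row A) (\<lambda>(i, j). cnj (A $$ (j, i)))"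
  unfolding mat_adjoint_def mat_of_rows_def by (rule eq_matI) (auto simp: cols_def)

lemma mat_anti_involution_mat_adjoint: "mat_anti_involution mat_adjoint"
  by unfold_locales (auto simp: mat_adjoint_altdef scalar_prod_def mult.commute)

lemma mat_anti_involution_transpose_mat: "mat_anti_involution transpose_mat"
  by unfold_locales (auto simp: scalar_prod_def mult.commute)

locale structured_quadratic_update = mat_anti_involution st
  for st :: "complex mat \<Rightarrow> complex mat" +
  fixes e1 e2 :: complex and n p :: nat and M D K Xc Lc :: "complex mat"
  assumes sign_e1: "e1 = 1 \<or> e1 = -1" and sign_e2: "e2 = 1 \<or> e2 = -1"
    and M: "M \<in> carrier_mat n n" and D: "D \<in> carrier_mat n n" and K: "K \<in> carrier_mat n n"
    and Xc: "Xc \<in> carrier_mat n p" and Lc: "Lc \<in> carrier_mat p p"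
    and symM: "st M = e1 \<cdot>\<^sub>m M" and symD: "st D = e2 \<cdot>\<^sub>m D" and symK: "st K = e1 \<cdot>\<^sub>m K"
    and invariant_Xc_Lc: "invariant_pair M D K Xc Lc"
begin

lemma dim_simps[simp]:
  "dim_row M = n" "dim_col M = n" "dim_row D = n" "dim_col D = n" "dim_row K = n" "dim_col K = n"
  "dim_row Xc = n" "dim_col Xc = p" "dim_row Lc = p" "dim_col Lc = p"
  using M D K Xc Lc by auto

lemma sign_simps[simp]:
  "e1 * e1 = 1" "e2 * e2 = 1" "e1 * (e1 * x) = x" "e2 * (e2 * x) = x" "cnj e1 = e1" "cnj e2 = e2"
  using sign_e1 sign_e2 by auto

text \<open>coupling Xc Lc and coupling Xc La are the matrices S and R of the theorem.\<close>
definition coupling :: "complex mat \<Rightarrow> complex mat \<Rightarrow> complex mat" where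
  "coupling X L = st Xc * M * X * L + (e1 * e2) \<cdot>\<^sub>m (st Lc * st Xc * M * X) + st Xc * D * X"

definition delta_M :: "complex mat \<Rightarrow> complex mat" where
  "delta_M Z = M * Xc * Z * st Xc * M"

definition delta_D :: "complex mat \<Rightarrow> complex mat" where
  "delta_D Z = (e1 * e2) \<cdot>\<^sub>m (M * Xc * Z * st Lc * st Xc * M) + M * Xc * Z * st Xc * D
    + M * Xc * Lc * Z * st Xc * M + D * Xc * Z * st Xc * M"

definition delta_K :: "complex mat \<Rightarrow> complex mat" where
  "delta_K Z = (e1 * e2) \<cdot>\<^sub>m (M * Xc * Lc * Z * st Lc * st Xc * M) + M * Xc * Lc * Z * st Xc * D
    + (e1 * e2) \<cdot>\<^sub>m (D * Xc * Z * st Lc * st Xc * M) + D * Xc * Z * st Xc * D"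

lemma quad_eval_delta:
  assumes X: "X \<in> carrier_mat n q" and L: "L \<in> carrier_mat q q" and Z: "Z \<in> carrier_mat p p"
  shows "quad_eval (M + delta_M Z) (D + delta_D Z) (K + delta_K Z) X L
    = quad_eval M D K X L + M * Xc * Z * coupling X L * L + (M * Xc * Lc + D * Xc) * Z * coupling X L"
  using carrier_matD[OF X] carrier_matD[OF L] carrier_matD[OF Z]
  unfolding quad_eval_def delta_M_def delta_D_def delta_K_def coupling_def
  by (simp add: mat_normalize)

text \<open>coupling X L * L - e1 e2 st Lc * coupling X L equals st Xc * Q(X, L) - e1 st (Q(Xc, Lc)) * X;
  this is where the symmetry of M, D, K enters.\<close>
lemma coupling_sylvester:
  assumes X: "X \<in> carrier_mat n q" and L: "L \<in> carrier_mat q q"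
    and invariant: "invariant_pair M D K X L"
  shows "coupling X L * L = (e1 * e2) \<cdot>\<^sub>m (st Lc * coupling X L)"
proof -
  note dims_XL[simp] = carrier_matD[OF X] carrier_matD[OF L]
  have Q: "st Xc * quad_eval M D K X L = 0\<^sub>m p q"
    using invariant unfolding invariant_pair_def by simp
  have Qc: "e1 \<cdot>\<^sub>m (st (quad_eval M D K Xc Lc) * X) = 0\<^sub>m p q"
    using invariant_Xc_Lc unfolding invariant_pair_def by (simp add: quad_eval_def)
  have "coupling X L * L + st Xc * K * X
      = (e1 * e2) \<cdot>\<^sub>m (st Lc * st Xc * M * X * L) + st Xc * quad_eval M D K X L"
    unfolding coupling_def quad_eval_def by (simp add: mat_normalize)
  also have "\<dots> = (e1 * e2) \<cdot>\<^sub>m (st Lc * st Xc * M * X * L)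
      + e1 \<cdot>\<^sub>m (st (quad_eval M D K Xc Lc) * X)"
    unfolding Q Qc ..
  also have "\<dots> = (e1 * e2) \<cdot>\<^sub>m (st Lc * coupling X L) + st Xc * K * X"
    unfolding coupling_def quad_eval_def
    by (simp add: mat_normalize st_mult st_add st_smult symM symD symK mult_ac)
  finally show ?thesis
    by (rule add_right_cancel_mat) (simp_all add: coupling_def)
qed

lemma coupling_eq_zero:
  assumes X: "X \<in> carrier_mat n q" and L: "L \<in> carrier_mat q q"
    and invariant: "invariant_pair M D K X L"
    and disjoint: "spectrum Lc \<inter> spectrum ((e1 * e2) \<cdot>\<^sub>m st L) = {}"
  shows "coupling X L = 0\<^sub>m p q"
proof -
  define W where "W = coupling X L"
  have W: "W \<in> carrier_mat p q"
    using X L unfolding W_def coupling_def by auto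
  have "st (W * L) = st ((e1 * e2) \<cdot>\<^sub>m (st Lc * W))"
    using coupling_sylvester[OF X L invariant] unfolding W_def by simp
  then have eq: "(e1 * e2) \<cdot>\<^sub>m st L * st W = st W * Lc"
    using W L by (simp add: st_mult st_smult mat_normalize mult_ac)
  have disjoint': "spectrum ((e1 * e2) \<cdot>\<^sub>m st L) \<inter> spectrum Lc = {}"
    using disjoint by (simp only: Int_commute)
  have "(e1 * e2) \<cdot>\<^sub>m st L \<in> carrier_mat q q" "st W \<in> carrier_mat q p"
    using W L by auto
  from sylvester_eq_zero[OF this(1) Lc this(2) eq disjoint']
  have "st W = 0\<^sub>m q p" .
  then have "st (st W) = 0\<^sub>m p q"
    by simp
  then show ?thesis
    unfolding W_def by simp
qed

lemma invariant_pair_delta_preserved: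
  assumes X: "X \<in> carrier_mat n q" and L: "L \<in> carrier_mat q q" and Z: "Z \<in> carrier_mat p p"
    and invariant: "invariant_pair M D K X L"
    and disjoint: "spectrum Lc \<inter> spectrum ((e1 * e2) \<cdot>\<^sub>m st L) = {}"
  shows "invariant_pair (M + delta_M Z) (D + delta_D Z) (K + delta_K Z) X L"
  using invariant carrier_matD[OF X] carrier_matD[OF L] carrier_matD[OF Z]
  unfolding invariant_pair_def quad_eval_delta[OF X L Z] coupling_eq_zero[OF X L invariant disjoint]
  by simp

lemma invariant_pair_delta_assigned:
  assumes La: "La \<in> carrier_mat p p" and Z: "Z \<in> carrier_mat p p"
    and assign: "Z * coupling Xc La = Lc - La"
  shows "invariant_pair (M + delta_M Z) (D + delta_D Z) (K + delta_K Z) Xc La"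
proof -
  note dims_La_Z[simp] = carrier_matD[OF La] carrier_matD[OF Z]
  define Dl where "Dl = Lc - La"
  have Lc_eq: "Lc = La + Dl"
    unfolding Dl_def by (rule eq_matI) simp_all
  have "quad_eval (M + delta_M Z) (D + delta_D Z) (K + delta_K Z) Xc La
      = quad_eval M D K Xc La + M * Xc * (Z * coupling Xc La) * La
        + (M * Xc * Lc + D * Xc) * (Z * coupling Xc La)"
    unfolding quad_eval_delta[OF Xc La Z] by (simp add: mat_normalize coupling_def)
  also have "\<dots> = quad_eval M D K Xc (La + Dl)"
    unfolding assign Dl_def[symmetric] by (subst Lc_eq) (simp add: quad_eval_def mat_normalize Dl_def)
  also have "\<dots> = 0\<^sub>m n p"
    using invariant_Xc_Lc unfolding Lc_eq invariant_pair_def by (simp add: Dl_def)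
  finally show ?thesis
    unfolding invariant_pair_def by simp
qed

lemma st_coupling_self: "st (coupling Xc Lc) = e2 \<cdot>\<^sub>m coupling Xc Lc"
  unfolding coupling_def by (simp add: mat_normalize st_mult st_add st_smult symM symD mult_ac)

text \<open>With S = coupling Xc Lc, R = coupling Xc La and Dl = Lc - La one has S = R + G Dl for the
  e1-symmetric G = st Xc M Xc, and st S = e2 S; the relations S Lc = e1 e2 st Lc S and (by hypothesis)
  S La = e1 e2 st La S give S Dl = e1 e2 st Dl S, and expanding st Dl S in two ways yields the claim.\<close>
lemma st_diff_mult_coupling:
  assumes La: "La \<in> carrier_mat p p"
    and sym: "coupling Xc Lc * La = e1 \<cdot>\<^sub>m st (coupling Xc Lc * La)"
  shows "st (Lc - La) * coupling Xc La = e1 \<cdot>\<^sub>m (st (coupling Xc La) * (Lc - La))"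
proof -
  define S where "S = coupling Xc Lc"
  define R where "R = coupling Xc La"
  define G where "G = st Xc * M * Xc"
  define Dl where "Dl = Lc - La"
  note dims_La[simp] = carrier_matD[OF La]
  have dims_local[simp]: "dim_row S = p" "dim_col S = p" "dim_row R = p" "dim_col R = p"
    "dim_row G = p" "dim_col G = p" "dim_row Dl = p" "dim_col Dl = p"
    unfolding S_def R_def G_def Dl_def coupling_def by simp_all
  have Lc_eq: "Lc = La + Dl"
    unfolding Dl_def by (rule eq_matI) simp_all
  have "st Xc * M * Xc * Lc = st Xc * M * Xc * La + st Xc * M * Xc * Dl"
    by (subst Lc_eq) (simp add: mat_normalize)
  then have S_eq: "S = R + G * Dl"
    unfolding S_def R_def G_def coupling_def by (simp add: mat_normalize)
  have stS: "st S = e2 \<cdot>\<^sub>m S"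
    unfolding S_def by (rule st_coupling_self)
  have stG: "st G = e1 \<cdot>\<^sub>m G"
    unfolding G_def by (simp add: st_mult symM mat_normalize)
  have SLc: "S * Lc = (e1 * e2) \<cdot>\<^sub>m (st Lc * S)"
    unfolding S_def by (rule coupling_sylvester[OF Xc Lc invariant_Xc_Lc])
  have SLa: "S * La = (e1 * e2) \<cdot>\<^sub>m (st La * S)"
    using sym unfolding S_def[symmetric] by (simp add: st_mult stS mat_normalize mult_ac)
  have "S * Dl + S * La = (e1 * e2) \<cdot>\<^sub>m (st Dl * S) + S * La"
    using SLc unfolding Lc_eq by (simp add: SLa st_add mat_normalize)
  then have SDl: "S * Dl = (e1 * e2) \<cdot>\<^sub>m (st Dl * S)"
    by (rule add_right_cancel_mat) simp_all
  have "st Dl * R + st Dl * G * Dl = st Dl * S"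
    unfolding S_eq by (simp add: mat_normalize)
  also have "\<dots> = e1 \<cdot>\<^sub>m (st S * Dl)"
    by (simp add: stS SDl mat_normalize mult_ac)
  also have "\<dots> = e1 \<cdot>\<^sub>m (st R * Dl) + st Dl * G * Dl"
    unfolding S_eq by (simp add: st_add st_mult stG mat_normalize)
  finally have "st Dl * R = e1 \<cdot>\<^sub>m (st R * Dl)"
    by (rule add_right_cancel_mat) simp_all
  then show ?thesis
    unfolding Dl_def R_def .
qed

lemma symmetric_delta:
  assumes Z: "Z \<in> carrier_mat p p" and symZ: "st Z = e1 \<cdot>\<^sub>m Z"
  shows "st (M + delta_M Z) = e1 \<cdot>\<^sub>m (M + delta_M Z)"
    and "st (D + delta_D Z) = e2 \<cdot>\<^sub>m (D + delta_D Z)"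
    and "st (K + delta_K Z) = e1 \<cdot>\<^sub>m (K + delta_K Z)"
  using carrier_matD[OF Z]
  unfolding delta_M_def delta_D_def delta_K_def
  by (simp_all add: mat_normalize st_mult st_add st_smult symM symD symK symZ mult_ac)

lemma assignment_matrix:
  assumes La: "La \<in> carrier_mat p p" and invertible: "invertible_mat (coupling Xc La)"
  defines "Z \<equiv> (Lc - La) * the (mat_inverse (coupling Xc La))"
  shows "Z \<in> carrier_mat p p" and "Z * coupling Xc La = Lc - La"
    and "coupling Xc Lc * La = e1 \<cdot>\<^sub>m st (coupling Xc Lc * La) \<Longrightarrow> st Z = e1 \<cdot>\<^sub>m Z"
proof -
  have R: "coupling Xc La \<in> carrier_mat p p"
    using La unfolding coupling_def carrier_mat_def by simp
  note R_inverse = invertible_mat_inverse[OF R invertible]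
  have Dl: "Lc - La \<in> carrier_mat p p"
    using La unfolding carrier_mat_def by simp
  show "Z \<in> carrier_mat p p"
    using Dl R_inverse(3) unfolding Z_def by simp
  show "Z * coupling Xc La = Lc - La"
    using Dl R R_inverse(2,3) unfolding Z_def by (simp add: right_mult_one_mat)
  show "st Z = e1 \<cdot>\<^sub>m Z" if "coupling Xc Lc * La = e1 \<cdot>\<^sub>m st (coupling Xc Lc * La)"
    unfolding Z_def using st_mult_inverse_eq[OF Dl R R_inverse(3,1) sign_simps(5)]
      st_diff_mult_coupling[OF La that] by simp
qed

end

theorem theorem3p6:
  fixes KK :: "complex set"
    and st :: "complex mat \<Rightarrow> complex mat"
    and e1 e2 :: complex
    and n p1 p2 :: nat
    and M D K Xc Lc Xf Lf La :: "complex mat"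
  assumes KK: "KK = \<real> \<or> KK = UNIV"
    and st: "st = mat_adjoint \<or> st = transpose_mat"
    and e1: "e1 = 1 \<or> e1 = -1"
    and e2: "e2 = 1 \<or> e2 = -1"
    and dims: "M \<in> carrier_mat n n" "D \<in> carrier_mat n n" "K \<in> carrier_mat n n"
      "Xc \<in> carrier_mat n p1" "Lc \<in> carrier_mat p1 p1"
      "Xf \<in> carrier_mat n p2" "Lf \<in> carrier_mat p2 p2"
      "La \<in> carrier_mat p1 p1"
    and over: "mat_over KK M" "mat_over KK D" "mat_over KK K"
      "mat_over KK Xc" "mat_over KK Lc" "mat_over KK Xf" "mat_over KK Lf" "mat_over KK La"
    and symM: "st M = e1 \<cdot>\<^sub>m M"
    and symD: "st D = e2 \<cdot>\<^sub>m D"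
    and symK: "st K = e1 \<cdot>\<^sub>m K"
    and invc: "invariant_pair M D K Xc Lc"
    and invf: "invariant_pair M D K Xf Lf"
    and spec: "spectrum Lc \<inter> spectrum ((e1 * e2) \<cdot>\<^sub>m st Lf) = {}"
    and Rinv: "invertible_mat (st Xc * M * Xc * La + (e1 * e2) \<cdot>\<^sub>m (st Lc * st Xc * M * Xc) + st Xc * D * Xc)"
  shows
    "let S = st Xc * M * Xc * Lc + (e1 * e2) \<cdot>\<^sub>m (st Lc * st Xc * M * Xc) + st Xc * D * Xc;
         R = st Xc * M * Xc * La + (e1 * e2) \<cdot>\<^sub>m (st Lc * st Xc * M * Xc) + st Xc * D * Xc;
         Z = (Lc - La) * the (mat_inverse R);
         dM = M * Xc * Z * st Xc * M;
         dD = (e1 * e2) \<cdot>\<^sub>m (M * Xc * Z * st Lc * st Xc * M) + M * Xc * Z * st Xc * D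
              + M * Xc * Lc * Z * st Xc * M + D * Xc * Z * st Xc * M;
         dK = (e1 * e2) \<cdot>\<^sub>m (M * Xc * Lc * Z * st Lc * st Xc * M) + M * Xc * Lc * Z * st Xc * D
              + (e1 * e2) \<cdot>\<^sub>m (D * Xc * Z * st Lc * st Xc * M) + D * Xc * Z * st Xc * D
     in invariant_pair (M + dM) (D + dD) (K + dK) Xc La
        \<and> invariant_pair (M + dM) (D + dD) (K + dK) Xf Lf
        \<and> (S * La = e1 \<cdot>\<^sub>m st (S * La) \<longrightarrow>
             st (M + dM) = e1 \<cdot>\<^sub>m (M + dM)
           \<and> st (D + dD) = e2 \<cdot>\<^sub>m (D + dD)
           \<and> st (K + dK) = e1 \<cdot>\<^sub>m (K + dK))"
proof -
  interpret mat_anti_involution st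
    using st mat_anti_involution_mat_adjoint mat_anti_involution_transpose_mat by blast
  interpret structured_quadratic_update st e1 e2 n p1 M D K Xc Lc
    by unfold_locales (rule e1 e2 dims symM symD symK invc)+
  define Z where "Z = (Lc - La) * the (mat_inverse (coupling Xc La))"
  have "invertible_mat (coupling Xc La)"
    using Rinv unfolding coupling_def .
  note Z = assignment_matrix[OF dims(8) this, folded Z_def]
  have "invariant_pair (M + delta_M Z) (D + delta_D Z) (K + delta_K Z) Xc La
      \<and> invariant_pair (M + delta_M Z) (D + delta_D Z) (K + delta_K Z) Xf Lf
      \<and> (coupling Xc Lc * La = e1 \<cdot>\<^sub>m st (coupling Xc Lc * La) \<longrightarrow>
           st (M + delta_M Z) = e1 \<cdot>\<^sub>m (M + delta_M Z)
         \<and> st (D + delta_D Z) = e2 \<cdot>\<^sub>m (D + delta_D Z)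
         \<and> st (K + delta_K Z) = e1 \<cdot>\<^sub>m (K + delta_K Z))"
    using invariant_pair_delta_assigned[OF dims(8) Z(1,2)]
      invariant_pair_delta_preserved[OF dims(6,7) Z(1) invf spec] symmetric_delta[OF Z(1,3)]
    by simp
  then show ?thesis
    unfolding Let_def Z_def coupling_def delta_M_def delta_D_def delta_K_def .
qed

end
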